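(* Let $n\ge2$ and let $g:\mathbb{R}\to(0,\infty)$ be a continuous, even, $2\pi/n$-periodic function that is nondecreasing on $[0,\pi/n]$, and let $D=\{re^{i\theta}:\theta\in[0,2\pi),\ 0\le r<g(\theta)\}$. For $\alpha\in\mathbb{R}$ let $S_\alpha$ denote the reflection across the line $\{re^{i\alpha}:r\in\mathbb{R}\}$, i.e. $S_\alpha(re^{i\theta})=re^{i(2\alpha-\theta)}$, and for $\alpha<\beta$ let $\sigma(\alpha,\beta)=\{re^{i\theta}: r>0,\ \alpha<\theta<\beta\}$. Then for every $t\in(0,\pi/n)$, $$S_{\frac{\pi}{n}+t}\Big(D\cap\sigma\big(\tfrac{\pi}{n}+t,\tfrac{2\pi}{n}+t\big)\Big)\subseteq D\cap\sigma\big(t,\tfrac{\pi}{n}+t\big).$$ Moreover, if $D$ is not a disk, then $$S_{\frac{\pi}{n}+t}\Big(\partial D\cap\sigma\big(\tfrac{\pi}{n}+t,\tfrac{2\pi}{n}+t\big)\Big)\cap D\neq\emptyset.$$ *)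

theory Defs
  imports "HOL-Analysis.Analysis"
begin

definition polar_domain :: "(real \<Rightarrow> real) \<Rightarrow> complex set" where
  "polar_domain g = {complex_of_real r * cis \<theta> | r \<theta>. 0 \<le> \<theta> \<and> \<theta> < 2 * pi \<and> 0 \<le> r \<and> r < g \<theta>}"

text \<open>Reflection across the line { r e^(i alpha) : r real }:
  S_alpha (r e^(i theta)) = r e^(i (2 alpha - theta)), i.e. z maps to e^(2 i alpha) * conj z.\<close>
definition refl_line :: "real \<Rightarrow> complex \<Rightarrow> complex" where
  "refl_line \<alpha> z = cis (2 * \<alpha>) * cnj z"

definition sector :: "real \<Rightarrow> real \<Rightarrow> complex set" where
  "sector \<alpha> \<beta> = {complex_of_real r * cis \<theta> | r \<theta>. 0 < r \<and> \<alpha> < \<theta> \<and> \<theta> < \<beta>}"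

end

theory Submission
  imports Defs "HOL-Library.Periodic_Fun"
begin

text \<open>Write \<open>a = \<pi>/n\<close>. Being even and \<open>2a\<close>-periodic, \<open>g\<close> is symmetric about \<open>a\<close>, and
  \<open>g x\<close> only depends on the distance \<open>d(x)\<close> from \<open>x\<close> to \<open>2a\<int>\<close>, nondecreasingly. The reflection
  \<open>S\<^bsub>a+t\<^esub>\<close> maps the ray of angle \<open>a + t + \<phi>\<close> to that of angle \<open>a + t - \<phi>\<close>, and for
  \<open>t, \<phi> \<in> [0, a]\<close> we have \<open>d(a + t + \<phi>) = |t + \<phi> - a| \<le> a - |t - \<phi>| = d(a + t - \<phi>)\<close>; hence
  the radial bound \<open>g\<close> can only grow under the reflection, which gives the inclusion.
  If \<open>D\<close> is not a disk, \<open>g\<close> is not constant, so \<open>g 0 < g a\<close>; a monotone function on \<open>[0, a]\<close>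
  that is not constant increases strictly across some step of any given length \<open>c \<le> a\<close>.
  Taking \<open>c = 2t\<close> or \<open>c = 2a - 2t\<close> yields an angle \<open>\<theta>\<close> in the sector with
  \<open>g \<theta> < g (2(a + t) - \<theta>)\<close>, and the boundary point \<open>g \<theta> cis \<theta>\<close> is reflected into \<open>D\<close>.\<close>

lemma mono_on_exists_strict_step:
  fixes h :: "real \<Rightarrow> 'b::linorder"
  assumes mono: "mono_on {0..a} h" and "h 0 < h a" and c: "0 < c" "c \<le> a"
  shows "\<exists>x\<in>{0..a - c}. h x < h (x + c)"
proof (rule ccontr)
  assume no_step: "\<not> ?thesis"
  have step: "h (x + c) = h x" if "0 \<le> x" "x \<le> a - c" for x
  proof -
    have "h x \<le> h (x + c)" using that c by (intro mono_onD[OF mono]) auto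
    moreover have "\<not> h x < h (x + c)" using no_step that by auto
    ultimately show ?thesis by simp
  qed
  have iter: "h (x + real m * c) = h x" if "0 \<le> x" "x + real m * c \<le> a" for x m
    using that
  proof (induction m arbitrary: x)
    case (Suc m)
    have "h (x + real (Suc m) * c) = h ((x + c) + real m * c)" by (simp add: algebra_simps)
    also have "\<dots> = h (x + c)" using Suc c by (intro Suc.IH) (auto simp: algebra_simps)
    also have "\<dots> = h x"
      using Suc c by (intro step) (auto simp: algebra_simps intro: order_trans[rotated])
    finally show ?case .
  qed simp
  define m where "m = nat \<lfloor>a / c\<rfloor>"
  have "real m = of_int \<lfloor>a / c\<rfloor>" using c by (simp add: m_def)
  then have m: "real m * c \<le> a" "a < real m * c + c"
    using c floor_divide_lower[of c a] floor_divide_upper[of c a] by (simp_all add: algebra_simps)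
  have "h a = h (a - real m * c)" using iter[of "a - real m * c" m] m by simp
  also have "\<dots> \<le> h c" using m c by (intro mono_onD[OF mono]) auto
  also have "h c = h 0" using step[of 0] c by simp
  finally show False using \<open>h 0 < h a\<close> by simp
qed

lemma cis_eq_cis_obtains_int:
  assumes "cis x = cis y"
  obtains k :: int where "x = y + of_int k * (2 * pi)"
proof -
  have "exp (\<i> * complex_of_real x) = exp (\<i> * complex_of_real y)"
    using assms by (simp add: cis_conv_exp)
  then obtain k :: int where "\<i> * complex_of_real x = \<i> * complex_of_real y + (of_int (2 * k) * pi) * \<i>"
    using exp_eq by blast
  then have "Im (\<i> * complex_of_real x) = Im (\<i> * complex_of_real y + (of_int (2 * k) * pi) * \<i>)"
    by (rule arg_cong)
  then have "x = y + of_int k * (2 * pi)" by simp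
  then show ?thesis by (rule that)
qed

lemma polar_domain_iff:
  assumes pos: "\<And>x. 0 < g x" and periodic: "\<And>x. g (x + 2 * pi) = g x" and "0 \<le> r"
  shows "complex_of_real r * cis \<theta> \<in> polar_domain g \<longleftrightarrow> r < g \<theta>"
proof -
  interpret g: periodic_fun_simple g "2 * pi" by unfold_locales (rule periodic)
  interpret cis: periodic_fun_simple cis "2 * pi" by unfold_locales (simp add: complex_eq_iff)
  show ?thesis
  proof
    assume "complex_of_real r * cis \<theta> \<in> polar_domain g"
    then obtain r' \<theta>' where eq: "complex_of_real r * cis \<theta> = complex_of_real r' * cis \<theta>'"
      and "0 \<le> r'" "r' < g \<theta>'"
      unfolding polar_domain_def by blast
    moreover have "r = r'" using arg_cong[OF eq, of norm] \<open>0 \<le> r\<close> \<open>0 \<le> r'\<close> by (simp add: norm_mult)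
    moreover have "g \<theta> = g \<theta>'" if "r \<noteq> 0"
    proof -
      have "cis \<theta> = cis \<theta>'" using eq \<open>r = r'\<close> that by simp
      then obtain k where "\<theta> = \<theta>' + of_int k * (2 * pi)" by (rule cis_eq_cis_obtains_int)
      then show ?thesis using g.plus_of_int by simp
    qed
    ultimately show "r < g \<theta>" using pos[of \<theta>] by fastforce
  next
    assume "r < g \<theta>"
    define \<theta>' where "\<theta>' = \<theta> - of_int \<lfloor>\<theta> / (2 * pi)\<rfloor> * (2 * pi)"
    have "0 \<le> \<theta>'" "\<theta>' < 2 * pi"
      using floor_divide_lower[of "2 * pi" \<theta>] floor_divide_upper[of "2 * pi" \<theta>]
      by (simp_all add: \<theta>'_def algebra_simps)
    moreover have "cis \<theta> = cis \<theta>'" "g \<theta> = g \<theta>'"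
      unfolding \<theta>'_def by (simp_all only: cis.minus_of_int g.minus_of_int)
    ultimately show "complex_of_real r * cis \<theta> \<in> polar_domain g"
      unfolding polar_domain_def using \<open>0 \<le> r\<close> \<open>r < g \<theta>\<close> by fastforce
  qed
qed

lemma polar_domain_const:
  assumes "0 < c" shows "polar_domain (\<lambda>_. c) = ball 0 c"
proof (intro set_eqI)
  fix z :: complex
  have "z = complex_of_real (cmod z) * cis (Arg z)" using rcis_cmod_Arg[of z] by (simp add: rcis_def)
  then show "z \<in> polar_domain (\<lambda>_. c) \<longleftrightarrow> z \<in> ball 0 c"
    using polar_domain_iff[of "\<lambda>_. c" "cmod z" "Arg z"] \<open>0 < c\<close> by simp
qed

lemma radial_bound_in_frontier_polar_domain:
  assumes pos: "\<And>x. 0 < g x" and periodic: "\<And>x. g (x + 2 * pi) = g x"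
  shows "complex_of_real (g \<theta>) * cis \<theta> \<in> frontier (polar_domain g)"
proof -
  let ?w = "complex_of_real (g \<theta>) * cis \<theta>"
  have "open_segment 0 ?w \<subseteq> polar_domain g"
  proof
    fix z assume "z \<in> open_segment 0 ?w"
    then obtain u where u: "0 < u" "u < 1" and z: "z = complex_of_real (u * g \<theta>) * cis \<theta>"
      by (auto simp: in_segment scaleR_conv_of_real)
    have "u * g \<theta> < g \<theta>" using u pos[of \<theta>] by simp
    then show "z \<in> polar_domain g"
      unfolding z using polar_domain_iff[of g, OF pos periodic, of "u * g \<theta>"] u pos[of \<theta>] by simp
  qed
  then have "closed_segment 0 ?w \<subseteq> closure (polar_domain g)"
    using closure_mono[of "open_segment 0 ?w"] pos[of \<theta>] by simp
  moreover have "?w \<notin> polar_domain g" using polar_domain_iff[of g, OF pos periodic] pos[of \<theta>] by simp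
  ultimately show ?thesis using interior_subset by (auto simp: frontier_def)
qed

lemma refl_line_polar:
  "refl_line \<alpha> (complex_of_real r * cis \<theta>) = complex_of_real r * cis (2 * \<alpha> - \<theta>)"
  unfolding refl_line_def by (simp add: cis_cnj mult.left_commute cis_mult)

lemma polar_in_sector: "0 < r \<Longrightarrow> \<alpha> < \<theta> \<Longrightarrow> \<theta> < \<beta> \<Longrightarrow> complex_of_real r * cis \<theta> \<in> sector \<alpha> \<beta>"
  unfolding sector_def by blast

locale dihedral_profile =
  fixes g :: "real \<Rightarrow> real" and a :: real
  assumes half_period_pos: "0 < a"
    and even: "g (- x) = g x"
    and periodic: "g (x + 2 * a) = g x"
    and mono: "mono_on {0..a} g"
begin

sublocale periodic_fun_simple g "2 * a"
  by unfold_locales (rule periodic)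

lemma abs_eq: "g \<bar>x\<bar> = g x"
  by (cases "x \<ge> 0") (simp_all add: even)

lemma symmetric_half_period: "g (a + x) = g (a - x)"
proof -
  have "g (a + x) = g (x - a)" using minus_1[of "a + x"] by simp
  also have "\<dots> = g (a - x)" using even[of "x - a"] by simp
  finally show ?thesis .
qed

lemma exists_fundamental_point: "\<exists>y\<in>{0..a}. g x = g y"
proof
  define k where "k = round (x / (2 * a))"
  let ?y = "\<bar>x - of_int k * (2 * a)\<bar>"
  have "\<bar>of_int k - x / (2 * a)\<bar> \<le> 1 / 2" unfolding k_def by (rule of_int_round_abs_le)
  then have "\<bar>of_int k * (2 * a) - x\<bar> \<le> a"
    using half_period_pos by (simp add: abs_le_iff field_simps)
  then show "?y \<in> {0..a}" by simp
  show "g x = g ?y" using minus_of_int[of x k] by (simp add: abs_eq)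
qed

lemma between_ends: "g 0 \<le> g x" "g x \<le> g a"
proof -
  obtain y where "y \<in> {0..a}" "g x = g y" using exists_fundamental_point by blast
  then show "g 0 \<le> g x" "g x \<le> g a"
    using half_period_pos by (auto intro: mono_onD[OF mono])
qed

lemma constant_if_ends_eq:
  assumes "g a = g 0" shows "g x = g 0"
  using between_ends[of x] assms by simp

lemma reflection_le:
  assumes t: "0 \<le> t" "t \<le> a" and \<phi>: "0 \<le> \<phi>" "\<phi> \<le> a"
  shows "g (a + t + \<phi>) \<le> g (a + t - \<phi>)"
proof -
  have "g (a + t + \<phi>) = g \<bar>t + \<phi> - a\<bar>"
    using symmetric_half_period[of "t + \<phi>"] abs_eq[of "t + \<phi> - a"] even[of "a - (t + \<phi>)"]
    by (simp add: add.assoc)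
  also have "\<dots> \<le> g (a - \<bar>t - \<phi>\<bar>)" using t \<phi> by (intro mono_onD[OF mono]) auto
  also have "\<dots> = g (a + t - \<phi>)"
  proof (cases "t \<le> \<phi>")
    case False
    then show ?thesis using symmetric_half_period[of "t - \<phi>"] by (simp add: add_diff_eq)
  qed (simp add: algebra_simps)
  finally show ?thesis .
qed

lemma exists_strict_reflection:
  assumes "g 0 < g a" and t: "0 < t" "t < a"
  obtains \<theta> where "a + t < \<theta>" "\<theta> < 2 * a + t" "g \<theta> < g (2 * (a + t) - \<theta>)"
proof (cases "2 * t \<le> a")
  case True
  then obtain x where x: "x \<in> {0..a - 2 * t}" "g x < g (x + 2 * t)"
    using mono_on_exists_strict_step[OF mono \<open>g 0 < g a\<close>, of "2 * t"] t by auto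
  have "g (2 * a - x) = g x" using symmetric_half_period[of "a - x"] by simp
  then show ?thesis using that[of "2 * a - x"] x t by (simp add: algebra_simps)
next
  case False
  then obtain x where x: "x \<in> {0..2 * t - a}" "g x < g (x + (2 * a - 2 * t))"
    using mono_on_exists_strict_step[OF mono \<open>g 0 < g a\<close>, of "2 * a - 2 * t"] t by auto
  have "g (2 * t - x) = g (x + (2 * a - 2 * t))"
    using even[of "2 * t - x"] plus_1[of "x - 2 * t"] by (simp add: algebra_simps)
  then show ?thesis using that[of "2 * a + x"] x t plus_1[of x] by (simp add: algebra_simps)
qed

lemma reflected_sector_subset:
  assumes pos: "\<And>x. 0 < g x" and periodic_2pi: "\<And>x. g (x + 2 * pi) = g x"
    and t: "0 \<le> t" "t \<le> a"
  shows "refl_line (a + t) ` (polar_domain g \<inter> sector (a + t) (2 * a + t))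
           \<subseteq> polar_domain g \<inter> sector t (a + t)"
proof
  fix w assume "w \<in> refl_line (a + t) ` (polar_domain g \<inter> sector (a + t) (2 * a + t))"
  then obtain r \<theta> where w: "w = refl_line (a + t) (complex_of_real r * cis \<theta>)"
    and r: "0 < r" and \<theta>: "a + t < \<theta>" "\<theta> < 2 * a + t"
    and "complex_of_real r * cis \<theta> \<in> polar_domain g"
    unfolding sector_def by blast
  then have "r < g \<theta>" using polar_domain_iff[of g, OF pos periodic_2pi] by simp
  also have "g \<theta> \<le> g (2 * (a + t) - \<theta>)"
    using reflection_le[of t "\<theta> - a - t"] t \<theta> by (simp add: algebra_simps)
  finally show "w \<in> polar_domain g \<inter> sector t (a + t)"
    unfolding w refl_line_polar using polar_domain_iff[of g, OF pos periodic_2pi] r \<theta>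
    by (auto intro: polar_in_sector)
qed

lemma reflected_frontier_meets_domain:
  assumes pos: "\<And>x. 0 < g x" and periodic_2pi: "\<And>x. g (x + 2 * pi) = g x"
    and "g 0 < g a" and "0 < t" "t < a"
  shows "refl_line (a + t) ` (frontier (polar_domain g) \<inter> sector (a + t) (2 * a + t))
           \<inter> polar_domain g \<noteq> {}"
proof -
  obtain \<theta> where \<theta>: "a + t < \<theta>" "\<theta> < 2 * a + t" "g \<theta> < g (2 * (a + t) - \<theta>)"
    using exists_strict_reflection assms(3-5) by blast
  let ?w = "complex_of_real (g \<theta>) * cis \<theta>"
  have "?w \<in> frontier (polar_domain g)"
    by (rule radial_bound_in_frontier_polar_domain[of g, OF pos periodic_2pi])
  moreover have "?w \<in> sector (a + t) (2 * a + t)" using \<theta> pos by (intro polar_in_sector)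
  moreover have "refl_line (a + t) ?w \<in> polar_domain g"
    unfolding refl_line_polar using polar_domain_iff[of g, OF pos periodic_2pi] \<theta> pos[of \<theta>] by simp
  ultimately show ?thesis by blast
qed

end

theorem lemma2:
  fixes n :: nat and g :: "real \<Rightarrow> real" and t :: real
  assumes "n \<ge> 2"
    and "\<And>x. g x > 0"
    and "continuous_on UNIV g"
    and "\<And>x. g (- x) = g x"
    and "\<And>x. g (x + 2 * pi / real n) = g x"
    and "mono_on {0 .. pi / real n} g"
    and "0 < t" and "t < pi / real n"
  shows "(refl_line (pi / real n + t) ` (polar_domain g \<inter> sector (pi / real n + t) (2 * pi / real n + t))
           \<subseteq> polar_domain g \<inter> sector t (pi / real n + t)) \<and>
         (\<not> (\<exists>c \<rho>. polar_domain g = ball c \<rho>) \<longrightarrow>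
           refl_line (pi / real n + t) ` (frontier (polar_domain g) \<inter> sector (pi / real n + t) (2 * pi / real n + t))
             \<inter> polar_domain g \<noteq> {})"
proof -
  note pos = assms(2)
  define a where "a = pi / real n"
  have two_a: "2 * pi / real n = 2 * a" unfolding a_def by simp
  interpret dihedral_profile g a
  proof
    show "0 < a" using assms(1) by (simp add: a_def)
    show "g (- x) = g x" for x by (rule assms(4))
    show "g (x + 2 * a) = g x" for x using assms(5)[of x] by (simp add: two_a)
    show "mono_on {0..a} g" using assms(6) by (simp add: a_def)
  qed
  have periodic_2pi: "g (x + 2 * pi) = g x" for x
    using plus_of_nat[of x n] assms(1) by (simp add: a_def)
  have "g 0 < g a" if "\<not> (\<exists>c \<rho>. polar_domain g = ball c \<rho>)"
  proof (rule ccontr)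
    assume "\<not> g 0 < g a"
    then have "g a = g 0" using between_ends(2)[of 0] by simp
    then have "g = (\<lambda>_. g 0)" using constant_if_ends_eq by blast
    then have "polar_domain g = ball 0 (g 0)" using polar_domain_const[OF pos[of 0]] by simp
    with that show False by blast
  qed
  moreover note reflected_sector_subset[OF pos periodic_2pi] reflected_frontier_meets_domain[OF pos periodic_2pi]
  ultimately show ?thesis
    using assms(7,8) unfolding two_a a_def[symmetric] by simp
qed

end
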